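(* Let $(\mathbf F,\prec)$ be an IS-family over a finite set $V$ and let $x\ge0$ be an integer. Then $\bigcup_{S\in\mathbf{Pr}_x}S=\bigcup_{S\in\mathbf E_x}S$.
   Context: Let $V$ be a finite set, $n=|V|$, $\mathbf F$ a family of subsets of $V$ and $\prec$ a strict partial order on $\mathbf F$; $S\preceq S'$ means $S\prec S'$ or $S=S'$. For $S\in\mathbf F$ and $v\in V$, $S$ covers $v$ if there is $S'\in\mathbf F$ with $S'\prec S$ and $v\in S'\setminus S$. $Pred(S)$ is the set of $S'\in\mathbf F$ with $S'\prec S$ such that there is no $S''\in\mathbf F$ with $S'\prec S''\prec S$. The visible set $Vis(S)$ is the set of $v\in V$ such that $v\in S'$ for some $S'\in Pred(S)$ and $v$ is not covered by any element of $Pred(S)$. For $S\in\mathbf F$ and $v\in S$, a witness of $v$ w.r.t. $S$ is a $\prec$-minimal element $S'\in\mathbf F$ with $S\prec S'$ and $v\in S\setminus S'$. $(\mathbf F,\prec)$ is an IS-family if: (SE) there is a unique element $sm(\mathbf F)\in\mathbf F$ with $sm(\mathbf F)\prec S$ for every other $S\in\mathbf F$; (SM) $S_1\prec S_2$ implies $|S_1|<|S_2|$; (SW) for every $S\in\mathbf F$ and $v\in S$ there is at most one witness of $v$ w.r.t. $S$; (TE) if $S_1\prec S_2\prec S_3$ are in $\mathbf F$ and $v\in S_1\setminus S_2$ then $v\in S_1\setminus S_3$; (LVS) for every $S\in\mathbf F$ and $S'\in Pred(S)$, $|S'|\le |Vis(S)|$; (DVS) for every $S\in\mathbf F$ with $S\ne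 sm(\mathbf F)$, $Vis(S)$ is not a subset of $S$; (EC) $sm(\mathbf F)$ can be computed in $O(n^3)$ time, for given $S\in\mathbf F$ and $v\in S$ the witness of $v$ w.r.t. $S$ can be computed (or its nonexistence reported) in $O(n^3)$ time, and $S_1\prec S_2$ can be tested in $O(|S_1|)$ time. Notation: $hat(S)=S\setminus\bigcup_{S'\prec S}S'$; $ex(S)=|S|-|sm(\mathbf F)|$; $\mathbf E_x=\{S\in\mathbf F: ex(S)\le x\}$; $S\in\mathbf F$ is principal if $hat(S)\ne\emptyset$; $\mathbf{Pr}_x$ is the family of all principal sets $S\in\mathbf F$ with $ex(S)\le x$. *)

theory Defs
  imports Main
begin

text \<open>A family F of subsets of V with a strict partial order prec on F.
  prec A B is read as A strictly precedes B.\<close>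

definition covers :: "'a set set \<Rightarrow> ('a set \<Rightarrow> 'a set \<Rightarrow> bool) \<Rightarrow> 'a set \<Rightarrow> 'a \<Rightarrow> bool" where
  "covers F prec S v \<longleftrightarrow> (\<exists>S'\<in>F. prec S' S \<and> v \<in> S' - S)"

definition Pred :: "'a set set \<Rightarrow> ('a set \<Rightarrow> 'a set \<Rightarrow> bool) \<Rightarrow> 'a set \<Rightarrow> 'a set set" where
  "Pred F prec S = {S'\<in>F. prec S' S \<and> \<not> (\<exists>S''\<in>F. prec S' S'' \<and> prec S'' S)}"

definition Vis :: "'a set set \<Rightarrow> ('a set \<Rightarrow> 'a set \<Rightarrow> bool) \<Rightarrow> 'a set \<Rightarrow> 'a set" where
  "Vis F prec S = {v. (\<exists>S'\<in>Pred F prec S. v \<in> S') \<and> \<not> (\<exists>S'\<in>Pred F prec S. covers F prec S' v)}"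

definition is_witness :: "'a set set \<Rightarrow> ('a set \<Rightarrow> 'a set \<Rightarrow> bool) \<Rightarrow> 'a set \<Rightarrow> 'a \<Rightarrow> 'a set \<Rightarrow> bool" where
  "is_witness F prec S v S' \<longleftrightarrow>
     S' \<in> F \<and> prec S S' \<and> v \<in> S - S' \<and>
     \<not> (\<exists>S''\<in>F. prec S S'' \<and> v \<in> S - S'' \<and> prec S'' S')"

definition sm :: "'a set set \<Rightarrow> ('a set \<Rightarrow> 'a set \<Rightarrow> bool) \<Rightarrow> 'a set" where
  "sm F prec = (THE s. s \<in> F \<and> (\<forall>S\<in>F. S \<noteq> s \<longrightarrow> prec s S))"

definition hat :: "'a set set \<Rightarrow> ('a set \<Rightarrow> 'a set \<Rightarrow> bool) \<Rightarrow> 'a set \<Rightarrow> 'a set" where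
  "hat F prec S = S - \<Union>{S'\<in>F. prec S' S}"

definition ex :: "'a set set \<Rightarrow> ('a set \<Rightarrow> 'a set \<Rightarrow> bool) \<Rightarrow> 'a set \<Rightarrow> int" where
  "ex F prec S = int (card S) - int (card (sm F prec))"

definition E_fam :: "'a set set \<Rightarrow> ('a set \<Rightarrow> 'a set \<Rightarrow> bool) \<Rightarrow> int \<Rightarrow> 'a set set" where
  "E_fam F prec x = {S\<in>F. ex F prec S \<le> x}"

definition principal :: "'a set set \<Rightarrow> ('a set \<Rightarrow> 'a set \<Rightarrow> bool) \<Rightarrow> 'a set \<Rightarrow> bool" where
  "principal F prec S \<longleftrightarrow> hat F prec S \<noteq> {}"

definition Pr_fam :: "'a set set \<Rightarrow> ('a set \<Rightarrow> 'a set \<Rightarrow> bool) \<Rightarrow> int \<Rightarrow> 'a set set" where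
  "Pr_fam F prec x = {S\<in>F. principal F prec S \<and> ex F prec S \<le> x}"

text \<open>IS-family: all structural axioms (SE), (SM), (SW), (TE), (LVS), (DVS).
  The algorithmic axiom (EC) is a complexity requirement and is not expressible.\<close>

definition IS_family :: "'a set \<Rightarrow> 'a set set \<Rightarrow> ('a set \<Rightarrow> 'a set \<Rightarrow> bool) \<Rightarrow> bool" where
  "IS_family V F prec \<longleftrightarrow>
     finite V \<and> F \<subseteq> Pow V \<and>
     (\<forall>S\<in>F. \<not> prec S S) \<and>
     (\<forall>S1\<in>F. \<forall>S2\<in>F. \<forall>S3\<in>F. prec S1 S2 \<and> prec S2 S3 \<longrightarrow> prec S1 S3) \<and>
     (\<exists>!s. s \<in> F \<and> (\<forall>S\<in>F. S \<noteq> s \<longrightarrow> prec s S)) \<and>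
     (\<forall>S1\<in>F. \<forall>S2\<in>F. prec S1 S2 \<longrightarrow> card S1 < card S2) \<and>
     (\<forall>S\<in>F. \<forall>v\<in>S. \<forall>W1 W2. is_witness F prec S v W1 \<and> is_witness F prec S v W2 \<longrightarrow> W1 = W2) \<and>
     (\<forall>S1\<in>F. \<forall>S2\<in>F. \<forall>S3\<in>F. \<forall>v. prec S1 S2 \<and> prec S2 S3 \<and> v \<in> S1 - S2 \<longrightarrow> v \<in> S1 - S3) \<and>
     (\<forall>S\<in>F. \<forall>S'\<in>Pred F prec S. card S' \<le> card (Vis F prec S)) \<and>
     (\<forall>S\<in>F. S \<noteq> sm F prec \<longrightarrow> \<not> Vis F prec S \<subseteq> S)"

end

theory Submission
  imports Defs
begin

text \<open>Given v \<in> S, take a set T \<preceq> S of least cardinality containing v. By (SM) no set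
  strictly below T contains v, so v \<in> hat T; and card T \<le> card S, so ex T \<le> ex S.
  Only transitivity and (SM) are needed.\<close>

lemma IS_family_trans:
  assumes "IS_family V F prec" "S1 \<in> F" "S2 \<in> F" "S3 \<in> F" "prec S1 S2" "prec S2 S3"
  shows "prec S1 S3"
proof -
  have "\<forall>S1\<in>F. \<forall>S2\<in>F. \<forall>S3\<in>F. prec S1 S2 \<and> prec S2 S3 \<longrightarrow> prec S1 S3"
    using assms(1) unfolding IS_family_def by (elim conjE)
  with assms(2-) show ?thesis by blast
qed

lemma IS_family_card_less:
  assumes "IS_family V F prec" "S1 \<in> F" "S2 \<in> F" "prec S1 S2"
  shows "card S1 < card S2"
proof -
  have "\<forall>S1\<in>F. \<forall>S2\<in>F. prec S1 S2 \<longrightarrow> card S1 < card S2"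
    using assms(1) unfolding IS_family_def by (elim conjE)
  with assms(2-) show ?thesis by blast
qed

lemma ex_preceding_mem_hat:
  assumes trans: "\<And>A B C. A \<in> F \<Longrightarrow> B \<in> F \<Longrightarrow> C \<in> F \<Longrightarrow> prec A B \<Longrightarrow> prec B C \<Longrightarrow> prec A C"
    and card_less: "\<And>A B. A \<in> F \<Longrightarrow> B \<in> F \<Longrightarrow> prec A B \<Longrightarrow> card A < card B"
    and "S \<in> F" "v \<in> S"
  shows "\<exists>T\<in>F. (T = S \<or> prec T S) \<and> v \<in> hat F prec T"
proof -
  define P where "P T \<longleftrightarrow> T \<in> F \<and> (T = S \<or> prec T S) \<and> v \<in> T" for T
  have "P S" using assms(3,4) unfolding P_def by blast
  then obtain T where T: "P T" and minT: "\<And>U. P U \<Longrightarrow> card T \<le> card U"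
    using ex_has_least_nat[of P S card] by blast
  hence TF: "T \<in> F" and TS: "T = S \<or> prec T S" and "v \<in> T" unfolding P_def by auto
  have "\<not> (\<exists>U\<in>F. prec U T \<and> v \<in> U)"
  proof
    assume "\<exists>U\<in>F. prec U T \<and> v \<in> U"
    then obtain U where U: "U \<in> F" "prec U T" "v \<in> U" by blast
    have "prec U S" using TS trans[OF U(1) TF assms(3) U(2)] U(2) by blast
    hence "card T \<le> card U" using U by (intro minT) (simp add: P_def)
    with card_less[OF U(1) TF U(2)] show False by simp
  qed
  with \<open>v \<in> T\<close> have "v \<in> hat F prec T" unfolding hat_def by blast
  with TF TS show ?thesis by blast
qed

theorem proposition4:
  fixes V :: "'a set" and F :: "'a set set" and prec :: "'a set \<Rightarrow> 'a set \<Rightarrow> bool" and x :: int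
  assumes "IS_family V F prec" and "x \<ge> 0"
  shows "\<Union>(Pr_fam F prec x) = \<Union>(E_fam F prec x)"
proof
  show "\<Union>(Pr_fam F prec x) \<subseteq> \<Union>(E_fam F prec x)"
    unfolding Pr_fam_def E_fam_def by blast
next
  show "\<Union>(E_fam F prec x) \<subseteq> \<Union>(Pr_fam F prec x)"
  proof
    fix v assume "v \<in> \<Union>(E_fam F prec x)"
    then obtain S where S: "S \<in> F" "ex F prec S \<le> x" "v \<in> S" unfolding E_fam_def by blast
    have "\<exists>T\<in>F. (T = S \<or> prec T S) \<and> v \<in> hat F prec T"
      by (rule ex_preceding_mem_hat[where prec = prec, OF IS_family_trans[OF assms(1)]
            IS_family_card_less[OF assms(1)] S(1,3)])
    then obtain T where T: "T \<in> F" "T = S \<or> prec T S" "v \<in> hat F prec T" by blast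
    have "card T \<le> card S"
      using T(2) IS_family_card_less[OF assms(1) T(1) S(1)] by fastforce
    with S(2) have "ex F prec T \<le> x" unfolding ex_def by simp
    moreover have "principal F prec T" "v \<in> T"
      using T(3) unfolding principal_def hat_def by auto
    ultimately show "v \<in> \<Union>(Pr_fam F prec x)" using T(1) unfolding Pr_fam_def by blast
  qed
qed

end
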